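(* Let $G=(U,\alpha)$ and $H=(V,\beta)$ be graphs. Then $G$ and $H$ are strongly disjoint if and only if the joining constraint space $\mathcal{N}(G,H)$ has dimension $1$.
   Context: A weight function on finite $U$ is $\alpha:U\times U\to\mathbb{R}$, $\alpha\ge0$, symmetric, summing to $1$; degree $p(u)=\sum_{u'}\alpha(u,u')$; a graph is $G=(U,\alpha)$. Let $S=\{((u,v),(u',v'))\in(U\times V)^2:\alpha(u,u')>0,\ \beta(v,v')>0\}$. The joining constraint space $\mathcal{N}(G,H)$ is the null space of the joining constraint matrix, i.e. the real vector space of functions $\gamma:S\to\mathbb{R}$ (extended by $0$ outside $S$), with $r(u,v)=\sum_{(u',v')}\gamma((u,v),(u',v'))$ and $T=\sum_{(u,v)}r(u,v)$, satisfying the linear equations: $\gamma((u,v),(u',v'))=\gamma((u',v'),(u,v))$; $\sum_v r(u,v)=p(u)T$ for each $u$; $\sum_u r(u,v)=q(v)T$ for each $v$ (where $q$ is the degree of $\beta$); and $p(u)\sum_{y}\gamma((u,v),(u',y))=\alpha(u,u')r(u,v)$, $q(v)\sum_x\gamma((u,v),(x,v'))=\beta(v,v')r(u,v)$ for all $u,u'\in U$, $v,v'\in V$. A weight joining of $\alpha,\beta$ is a weight function $\gamma$ on $U\times V$ satisfying: degree $r$ has marginals $\sum_v r(u,v)=p(u)$, $\sum_u r(u,v)=q(v)$, and the two transition equations above. $G,H$ are strongly disjoint if the only weight joining is $\alpha\otimes\beta$, $(\alpha\otimes\beta)((u,v),(u',v'))=\alpha(u,u')\beta(v,v')$. *)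

theory Defs
  imports "HOL-Analysis.Analysis" "HOL-Library.Function_Algebras"
begin

text \<open>Finite vertex sets are modelled as finite types 'u, 'v (U = UNIV).
  A weight function is a map on pairs.\<close>

definition weight_fun :: "('a::finite \<times> 'a \<Rightarrow> real) \<Rightarrow> bool" where
  "weight_fun \<alpha> \<longleftrightarrow> (\<forall>x y. 0 \<le> \<alpha> (x, y)) \<and> (\<forall>x y. \<alpha> (x, y) = \<alpha> (y, x))
      \<and> (\<Sum>x\<in>UNIV. \<Sum>y\<in>UNIV. \<alpha> (x, y)) = 1"

definition degree :: "('a::finite \<times> 'a \<Rightarrow> real) \<Rightarrow> 'a \<Rightarrow> real" where
  "degree \<alpha> u = (\<Sum>u'\<in>UNIV. \<alpha> (u, u'))"

definition tensor :: "('u \<times> 'u \<Rightarrow> real) \<Rightarrow> ('v \<times> 'v \<Rightarrow> real)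
    \<Rightarrow> ('u \<times> 'v) \<times> ('u \<times> 'v) \<Rightarrow> real" where
  "tensor \<alpha> \<beta> = (\<lambda>((u, v), (u', v')). \<alpha> (u, u') * \<beta> (v, v'))"

definition transition_eqs :: "('u::finite \<times> 'u \<Rightarrow> real) \<Rightarrow> ('v::finite \<times> 'v \<Rightarrow> real)
    \<Rightarrow> (('u \<times> 'v) \<times> ('u \<times> 'v) \<Rightarrow> real) \<Rightarrow> bool" where
  "transition_eqs \<alpha> \<beta> \<gamma> \<longleftrightarrow>
     (\<forall>u v u'. degree \<alpha> u * (\<Sum>y\<in>UNIV. \<gamma> ((u, v), (u', y))) = \<alpha> (u, u') * degree \<gamma> (u, v)) \<and>
     (\<forall>u v v'. degree \<beta> v * (\<Sum>x\<in>UNIV. \<gamma> ((u, v), (x, v'))) = \<beta> (v, v') * degree \<gamma> (u, v))"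

definition weight_joining :: "('u::finite \<times> 'u \<Rightarrow> real) \<Rightarrow> ('v::finite \<times> 'v \<Rightarrow> real)
    \<Rightarrow> (('u \<times> 'v) \<times> ('u \<times> 'v) \<Rightarrow> real) \<Rightarrow> bool" where
  "weight_joining \<alpha> \<beta> \<gamma> \<longleftrightarrow> weight_fun \<gamma> \<and>
     (\<forall>u. (\<Sum>v\<in>UNIV. degree \<gamma> (u, v)) = degree \<alpha> u) \<and>
     (\<forall>v. (\<Sum>u\<in>UNIV. degree \<gamma> (u, v)) = degree \<beta> v) \<and>
     transition_eqs \<alpha> \<beta> \<gamma>"

definition strongly_disjoint :: "('u::finite \<times> 'u \<Rightarrow> real) \<Rightarrow> ('v::finite \<times> 'v \<Rightarrow> real) \<Rightarrow> bool" where
  "strongly_disjoint \<alpha> \<beta> \<longleftrightarrow> (\<forall>\<gamma>. weight_joining \<alpha> \<beta> \<gamma> \<longrightarrow> \<gamma> = tensor \<alpha> \<beta>)"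

definition supp_S :: "('u \<times> 'u \<Rightarrow> real) \<Rightarrow> ('v \<times> 'v \<Rightarrow> real) \<Rightarrow> (('u \<times> 'v) \<times> ('u \<times> 'v)) set" where
  "supp_S \<alpha> \<beta> = {((u, v), (u', v')). \<alpha> (u, u') > 0 \<and> \<beta> (v, v') > 0}"

text \<open>Joining constraint space: functions on S (extended by 0) satisfying the
  homogeneous linear equations, with T the total degree.\<close>
definition joining_constraint_space :: "('u::finite \<times> 'u \<Rightarrow> real) \<Rightarrow> ('v::finite \<times> 'v \<Rightarrow> real)
    \<Rightarrow> (('u \<times> 'v) \<times> ('u \<times> 'v) \<Rightarrow> real) set" where
  "joining_constraint_space \<alpha> \<beta> = {\<gamma>.
     (\<forall>z. z \<notin> supp_S \<alpha> \<beta> \<longrightarrow> \<gamma> z = 0) \<and>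
     (\<forall>x y. \<gamma> (x, y) = \<gamma> (y, x)) \<and>
     (let T = (\<Sum>w\<in>UNIV. degree \<gamma> w) in
       (\<forall>u. (\<Sum>v\<in>UNIV. degree \<gamma> (u, v)) = degree \<alpha> u * T) \<and>
       (\<forall>v. (\<Sum>u\<in>UNIV. degree \<gamma> (u, v)) = degree \<beta> v * T)) \<and>
     transition_eqs \<alpha> \<beta> \<gamma>}"

definition fun_dim :: "('a \<Rightarrow> real) set \<Rightarrow> nat" where
  "fun_dim N = vector_space.dim (\<lambda>c (f::'a \<Rightarrow> real) x. c * f x) N"

end

theory Submission
  imports Defs
begin

(* Weight joinings are exactly the nonnegative elements of total mass 1 of the joining constraint
   space N, and the tensor product t is one of them. If dim N = 1, two elements of N with the same
   nonzero mass coincide, so every weight joining equals t. Conversely, t vanishes only off S, where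
   every element of N vanishes; hence for g in N and small e > 0 the function t + e g is nonnegative
   with positive mass, so after normalisation it is a weight joining and, by strong disjointness,
   equal to t. Comparing masses shows that g is a multiple of t, so N is the line spanned by t. *)

lemma sum_UNIV_prod:
  "(\<Sum>z\<in>UNIV. f z) = (\<Sum>a\<in>(UNIV :: 'a::finite set). \<Sum>b\<in>(UNIV :: 'b::finite set). f (a, b))"
  by (simp add: sum.cartesian_product flip: UNIV_Times_UNIV)

interpretation fun_vs: vector_space "\<lambda>c (f::'a \<Rightarrow> real) x. c * f x"
  by unfold_locales (auto simp: algebra_simps fun_eq_iff)

lemma exists_pos_perturbation_ge_half:
  fixes t g :: "'a::finite \<Rightarrow> real"
  assumes "\<And>z. 0 \<le> t z" and "\<And>z. t z = 0 \<Longrightarrow> g z = 0"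
  obtains e where "0 < e" and "\<forall>z. t z / 2 \<le> t z + e * g z"
proof -
  have "\<forall>\<^sub>F e in at_right 0. t z / 2 \<le> t z + e * g z" for z
  proof (cases "t z = 0")
    case True
    then show ?thesis using assms(2) by simp
  next
    case False
    then have "t z / 2 < t z" using assms(1)[of z] by simp
    moreover have "((\<lambda>e. t z + e * g z) \<longlongrightarrow> t z) (at_right 0)"
      by (auto intro!: tendsto_eq_intros)
    ultimately have "\<forall>\<^sub>F e in at_right 0. t z / 2 < t z + e * g z"
      by (rule order_tendstoD(1)[rotated])
    then show ?thesis by (rule eventually_mono) simp
  qed
  then have "\<forall>\<^sub>F e in at_right 0. 0 < e \<and> (\<forall>z. t z / 2 \<le> t z + e * g z)"
    by (intro eventually_conj eventually_at_right_less eventually_all_finite)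
  then obtain e where "0 < e \<and> (\<forall>z. t z / 2 \<le> t z + e * g z)"
    using eventually_happens'[OF trivial_limit_at_right_real] by blast
  then show thesis using that by blast
qed

lemma eq_sum_scaled_if_nonneg:
  fixes N :: "('a::finite \<Rightarrow> real) set"
  assumes "fun_vs.subspace N"
    and unique: "\<forall>g\<in>N. (\<forall>z. 0 \<le> g z) \<longrightarrow> sum g UNIV = 1 \<longrightarrow> g = t"
    and "h \<in> N" and h_nonneg: "\<And>z. 0 \<le> h z" and "0 < sum h UNIV"
  shows "h = (\<lambda>z. sum h UNIV * t z)"
proof -
  define m where "m = sum h UNIV"
  have "0 < m"
    using \<open>0 < sum h UNIV\<close> by (simp add: m_def)
  have "(\<lambda>z. h z / m) = t"
  proof (rule unique[rule_format])
    show "(\<lambda>z. h z / m) \<in> N"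
      using fun_vs.subspace_scale[OF assms(1) \<open>h \<in> N\<close>, of "1 / m"] by simp
    show "0 \<le> h z / m" for z
      using h_nonneg \<open>0 < m\<close> by simp
    show "(\<Sum>z\<in>UNIV. h z / m) = 1"
      using \<open>0 < m\<close> by (simp add: m_def sum_divide_distrib[symmetric])
  qed
  then have "h z / m = t z" for z
    by (rule fun_cong)
  then have "h z = m * t z" for z
    using \<open>0 < m\<close> by (simp add: field_simps)
  then show ?thesis
    unfolding m_def by (rule ext)
qed

lemma eq_sum_scaled_if_unique_nonneg_normalized:
  fixes N :: "('a::finite \<Rightarrow> real) set"
  assumes "fun_vs.subspace N" and "t \<in> N" and t_nonneg: "\<And>z. 0 \<le> t z" and "sum t UNIV = 1"
    and support: "\<And>g z. g \<in> N \<Longrightarrow> t z = 0 \<Longrightarrow> g z = 0"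
    and unique: "\<forall>g\<in>N. (\<forall>z. 0 \<le> g z) \<longrightarrow> sum g UNIV = 1 \<longrightarrow> g = t"
    and "g \<in> N"
  shows "g = (\<lambda>z. sum g UNIV * t z)"
proof -
  obtain e where "0 < e" and h_ge: "\<forall>z. t z / 2 \<le> t z + e * g z"
    using t_nonneg support[OF \<open>g \<in> N\<close>] by (rule exists_pos_perturbation_ge_half)
  define h where "h = (\<lambda>z. t z + e * g z)"
  have "t + (\<lambda>z. e * g z) \<in> N"
    using fun_vs.subspace_scale[OF assms(1) \<open>g \<in> N\<close>]
    by (rule fun_vs.subspace_add[OF assms(1,2)])
  then have "h \<in> N"
    by (simp add: h_def plus_fun_def)
  have sum_h: "sum h UNIV = 1 + e * sum g UNIV"
    using \<open>sum t UNIV = 1\<close> by (simp add: h_def sum.distrib sum_distrib_left)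
  have h_nonneg: "0 \<le> h z" for z
    using h_ge[rule_format, of z] t_nonneg[of z] unfolding h_def by linarith
  have "sum (\<lambda>z. t z / 2) UNIV \<le> sum h UNIV"
    unfolding h_def by (rule sum_mono) (rule h_ge[rule_format])
  then have "0 < sum h UNIV"
    using \<open>sum t UNIV = 1\<close> by (simp add: sum_divide_distrib[symmetric])
  have "g z = sum g UNIV * t z" for z
  proof -
    have "h z = sum h UNIV * t z"
      using eq_sum_scaled_if_nonneg[OF assms(1) unique \<open>h \<in> N\<close> h_nonneg \<open>0 < sum h UNIV\<close>]
      by (rule fun_cong)
    then have "e * g z = e * (sum g UNIV * t z)"
      unfolding sum_h unfolding h_def by algebra
    then show ?thesis
      using \<open>0 < e\<close> by (metis mult_left_cancel less_irrefl)
  qed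
  then show ?thesis
    by (rule ext)
qed

lemma subset_span_singleton_if_unique_nonneg_normalized:
  fixes N :: "('a::finite \<Rightarrow> real) set"
  assumes "fun_vs.subspace N" and "t \<in> N" and "\<And>z. 0 \<le> t z" and "sum t UNIV = 1"
    and "\<And>g z. g \<in> N \<Longrightarrow> t z = 0 \<Longrightarrow> g z = 0"
    and "\<forall>g\<in>N. (\<forall>z. 0 \<le> g z) \<longrightarrow> sum g UNIV = 1 \<longrightarrow> g = t"
  shows "N \<subseteq> fun_vs.span {t}"
proof
  fix g assume "g \<in> N"
  have "g = (\<lambda>z. sum g UNIV * t z)"
    using assms \<open>g \<in> N\<close> by (rule eq_sum_scaled_if_unique_nonneg_normalized)
  then show "g \<in> fun_vs.span {t}"
    unfolding fun_vs.span_singleton by blast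
qed

lemma dim_eq_1_if_subset_span_singleton:
  assumes "t \<in> N" and "t \<noteq> 0" and "N \<subseteq> fun_vs.span {t}"
  shows "fun_vs.dim N = 1"
proof (rule fun_vs.dim_unique)
  show "fun_vs.independent {t}"
    using \<open>t \<noteq> 0\<close> by (simp add: fun_vs.independent_insert)
qed (use assms in auto)

lemma eq_if_dim_1_same_sum:
  fixes N :: "('a::finite \<Rightarrow> real) set"
  assumes "fun_vs.dim N = 1" and "f \<in> N" and "g \<in> N"
    and "sum f UNIV = sum g UNIV" and "sum f UNIV \<noteq> 0"
  shows "f = g"
proof -
  obtain B where "B \<subseteq> N" "N \<subseteq> fun_vs.span B" "card B = 1"
    using fun_vs.basis_exists[of N] assms(1) by metis
  then obtain b where "N \<subseteq> fun_vs.span {b}"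
    by (metis card_1_singletonE)
  then obtain c d where f: "f = (\<lambda>z. c * b z)" and g: "g = (\<lambda>z. d * b z)"
    using assms(2,3) unfolding fun_vs.span_singleton by blast
  have "c * sum b UNIV = d * sum b UNIV" and "c * sum b UNIV \<noteq> 0"
    using assms(4,5) by (simp_all add: f g sum_distrib_left)
  then have "c = d" by simp
  then show ?thesis by (simp add: f g)
qed

lemma sum_degree_UNIV: "(\<Sum>w\<in>UNIV. degree g w) = (\<Sum>z\<in>UNIV. g z)"
  by (simp add: degree_def sum_UNIV_prod[of g])

lemma degree_lincomb: "degree (\<lambda>z. a * f z + b * g z) w = a * degree f w + b * degree g w"
  by (simp add: degree_def sum.distrib sum_distrib_left)

lemma mem_joining_constraint_space_iff:
  "\<gamma> \<in> joining_constraint_space \<alpha> \<beta> \<longleftrightarrow>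
     (\<forall>z. z \<notin> supp_S \<alpha> \<beta> \<longrightarrow> \<gamma> z = 0) \<and> (\<forall>x y. \<gamma> (x, y) = \<gamma> (y, x)) \<and>
     (\<forall>u. (\<Sum>v\<in>UNIV. degree \<gamma> (u, v)) = degree \<alpha> u * sum \<gamma> UNIV) \<and>
     (\<forall>v. (\<Sum>u\<in>UNIV. degree \<gamma> (u, v)) = degree \<beta> v * sum \<gamma> UNIV) \<and>
     transition_eqs \<alpha> \<beta> \<gamma>"
  by (simp add: joining_constraint_space_def sum_degree_UNIV)

lemma lincomb_mem_joining_constraint_space:
  assumes "f \<in> joining_constraint_space \<alpha> \<beta>" and "g \<in> joining_constraint_space \<alpha> \<beta>"
  shows "(\<lambda>z. a * f z + b * g z) \<in> joining_constraint_space \<alpha> \<beta>"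
  using assms unfolding mem_joining_constraint_space_iff transition_eqs_def
  by (simp add: degree_lincomb sum.distrib algebra_simps flip: sum_distrib_left)

lemma subspace_joining_constraint_space: "fun_vs.subspace (joining_constraint_space \<alpha> \<beta>)"
  unfolding fun_vs.subspace_def
proof (intro conjI ballI allI)
  show "0 \<in> joining_constraint_space \<alpha> \<beta>"
    by (simp add: mem_joining_constraint_space_iff transition_eqs_def degree_def)
  show "f + g \<in> joining_constraint_space \<alpha> \<beta>"
    if "f \<in> joining_constraint_space \<alpha> \<beta>" and "g \<in> joining_constraint_space \<alpha> \<beta>" for f g
    using lincomb_mem_joining_constraint_space[OF that, of 1 1] by (simp add: plus_fun_def)
  show "(\<lambda>z. c * f z) \<in> joining_constraint_space \<alpha> \<beta>"
    if "f \<in> joining_constraint_space \<alpha> \<beta>" for c f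
    using lincomb_mem_joining_constraint_space[OF that that, of c 0] by simp
qed

lemma weight_fun_iff:
  "weight_fun \<gamma> \<longleftrightarrow> (\<forall>z. 0 \<le> \<gamma> z) \<and> (\<forall>x y. \<gamma> (x, y) = \<gamma> (y, x)) \<and> sum \<gamma> UNIV = 1"
  by (simp add: weight_fun_def sum_UNIV_prod[of \<gamma>])

lemma weight_joining_vanishes_left:
  assumes "weight_joining \<alpha> \<beta> \<gamma>" and "\<alpha> (u, u') = 0"
  shows "\<gamma> ((u, v), (u', v')) = 0"
proof -
  have nonneg: "\<And>z. 0 \<le> \<gamma> z"
    using assms(1) unfolding weight_joining_def weight_fun_iff by blast
  have "(\<Sum>y\<in>UNIV. \<gamma> ((u, v), (u', y))) = 0"
  proof (cases "degree \<alpha> u = 0")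
    case True
    then have "(\<Sum>v\<in>UNIV. degree \<gamma> (u, v)) = 0"
      using assms(1) by (simp add: weight_joining_def)
    then have "degree \<gamma> (u, v) = 0"
      by (simp add: sum_nonneg_eq_0_iff degree_def sum_nonneg nonneg)
    then show ?thesis
      by (simp add: degree_def sum_nonneg_eq_0_iff nonneg)
  next
    case False
    have "degree \<alpha> u * (\<Sum>y\<in>UNIV. \<gamma> ((u, v), (u', y))) = \<alpha> (u, u') * degree \<gamma> (u, v)"
      using assms(1) by (simp add: weight_joining_def transition_eqs_def)
    then show ?thesis using False assms(2) by simp
  qed
  then show ?thesis by (simp add: sum_nonneg_eq_0_iff nonneg)
qed

lemma weight_joining_vanishes_right:
  assumes "weight_joining \<alpha> \<beta> \<gamma>" and "\<beta> (v, v') = 0"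
  shows "\<gamma> ((u, v), (u', v')) = 0"
proof -
  have nonneg: "\<And>z. 0 \<le> \<gamma> z"
    using assms(1) unfolding weight_joining_def weight_fun_iff by blast
  have "(\<Sum>x\<in>UNIV. \<gamma> ((u, v), (x, v'))) = 0"
  proof (cases "degree \<beta> v = 0")
    case True
    then have "(\<Sum>u\<in>UNIV. degree \<gamma> (u, v)) = 0"
      using assms(1) by (simp add: weight_joining_def)
    then have "degree \<gamma> (u, v) = 0"
      by (simp add: sum_nonneg_eq_0_iff degree_def sum_nonneg nonneg)
    then show ?thesis
      by (simp add: degree_def sum_nonneg_eq_0_iff nonneg)
  next
    case False
    have "degree \<beta> v * (\<Sum>x\<in>UNIV. \<gamma> ((u, v), (x, v'))) = \<beta> (v, v') * degree \<gamma> (u, v)"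
      using assms(1) by (simp add: weight_joining_def transition_eqs_def)
    then show ?thesis using False assms(2) by simp
  qed
  then show ?thesis by (simp add: sum_nonneg_eq_0_iff nonneg)
qed

lemma weight_joining_vanishes_off_supp:
  assumes "weight_fun \<alpha>" and "weight_fun \<beta>" and "weight_joining \<alpha> \<beta> \<gamma>"
    and "((u, v), (u', v')) \<notin> supp_S \<alpha> \<beta>"
  shows "\<gamma> ((u, v), (u', v')) = 0"
proof -
  have "\<alpha> (u, u') = 0 \<or> \<beta> (v, v') = 0"
    using assms by (auto simp: supp_S_def weight_fun_iff order.order_iff_strict)
  then show ?thesis
    using weight_joining_vanishes_left weight_joining_vanishes_right assms(3) by blast
qed

lemma weight_joining_iff_nonneg_normalized:
  assumes "weight_fun \<alpha>" and "weight_fun \<beta>"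
  shows "weight_joining \<alpha> \<beta> \<gamma> \<longleftrightarrow>
    \<gamma> \<in> joining_constraint_space \<alpha> \<beta> \<and> (\<forall>z. 0 \<le> \<gamma> z) \<and> sum \<gamma> UNIV = 1"
proof
  assume wj: "weight_joining \<alpha> \<beta> \<gamma>"
  then have "\<forall>z. z \<notin> supp_S \<alpha> \<beta> \<longrightarrow> \<gamma> z = 0"
    using weight_joining_vanishes_off_supp[OF assms] by auto
  with wj show "\<gamma> \<in> joining_constraint_space \<alpha> \<beta> \<and> (\<forall>z. 0 \<le> \<gamma> z) \<and> sum \<gamma> UNIV = 1"
    by (simp add: weight_joining_def weight_fun_iff mem_joining_constraint_space_iff)
qed (simp add: weight_joining_def weight_fun_iff mem_joining_constraint_space_iff)

lemma degree_tensor: "degree (tensor \<alpha> \<beta>) (u, v) = degree \<alpha> u * degree \<beta> v"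
  by (simp add: degree_def tensor_def sum_product sum_UNIV_prod)

lemma weight_joining_tensor:
  assumes "weight_fun \<alpha>" and "weight_fun \<beta>"
  shows "weight_joining \<alpha> \<beta> (tensor \<alpha> \<beta>)"
proof -
  have sum_degree: "(\<Sum>u\<in>UNIV. degree \<alpha> u) = 1" "(\<Sum>v\<in>UNIV. degree \<beta> v) = 1"
    using assms by (simp_all add: sum_degree_UNIV weight_fun_iff)
  have "weight_fun (tensor \<alpha> \<beta>)"
  proof -
    have "sum (tensor \<alpha> \<beta>) UNIV = (\<Sum>w\<in>UNIV. degree (tensor \<alpha> \<beta>) w)"
      by (simp only: sum_degree_UNIV)
    also have "\<dots> = (\<Sum>u\<in>UNIV. degree \<alpha> u) * (\<Sum>v\<in>UNIV. degree \<beta> v)"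
      by (simp add: sum_UNIV_prod degree_tensor sum_product)
    finally show ?thesis
      using assms sum_degree by (auto simp: weight_fun_iff tensor_def)
  qed
  moreover have "transition_eqs \<alpha> \<beta> (tensor \<alpha> \<beta>)"
    unfolding transition_eqs_def degree_tensor
    by (simp add: tensor_def degree_def sum_distrib_left[symmetric] sum_distrib_right[symmetric])
  ultimately show ?thesis
    by (simp add: weight_joining_def degree_tensor sum_degree
        flip: sum_distrib_left sum_distrib_right)
qed

lemma joining_constraint_space_vanishes_where_tensor_vanishes:
  assumes "g \<in> joining_constraint_space \<alpha> \<beta>" and "tensor \<alpha> \<beta> z = 0"
  shows "g z = 0"
proof -
  have "z \<notin> supp_S \<alpha> \<beta>"
    using assms(2) by (auto simp: tensor_def supp_S_def)
  then show ?thesis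
    using assms(1) unfolding mem_joining_constraint_space_iff by blast
qed

lemma strongly_disjoint_iff_unique_nonneg_normalized:
  assumes "weight_fun \<alpha>" and "weight_fun \<beta>"
  shows "strongly_disjoint \<alpha> \<beta> \<longleftrightarrow> (\<forall>g\<in>joining_constraint_space \<alpha> \<beta>.
    (\<forall>z. 0 \<le> g z) \<longrightarrow> sum g UNIV = 1 \<longrightarrow> g = tensor \<alpha> \<beta>)"
  unfolding strongly_disjoint_def weight_joining_iff_nonneg_normalized[OF assms] by blast

theorem proposition5p4:
  fixes \<alpha> :: "'u::finite \<times> 'u \<Rightarrow> real" and \<beta> :: "'v::finite \<times> 'v \<Rightarrow> real"
  assumes "weight_fun \<alpha>" and "weight_fun \<beta>"
  shows "strongly_disjoint \<alpha> \<beta> \<longleftrightarrow> fun_dim (joining_constraint_space \<alpha> \<beta>) = 1"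
proof -
  let ?N = "joining_constraint_space \<alpha> \<beta>" and ?t = "tensor \<alpha> \<beta>"
  have t: "?t \<in> ?N" "\<And>z. 0 \<le> ?t z" "sum ?t UNIV = 1"
    using weight_joining_tensor[OF assms]
    unfolding weight_joining_iff_nonneg_normalized[OF assms] by blast+
  show ?thesis
    unfolding fun_dim_def strongly_disjoint_iff_unique_nonneg_normalized[OF assms]
  proof
    assume "\<forall>g\<in>?N. (\<forall>z. 0 \<le> g z) \<longrightarrow> sum g UNIV = 1 \<longrightarrow> g = ?t"
    with subspace_joining_constraint_space t joining_constraint_space_vanishes_where_tensor_vanishes
    have "?N \<subseteq> fun_vs.span {?t}"
      by (rule subset_span_singleton_if_unique_nonneg_normalized)
    moreover have "?t \<noteq> 0"
      using t(3) by auto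
    ultimately show "fun_vs.dim ?N = 1"
      by (intro dim_eq_1_if_subset_span_singleton[OF t(1)])
  next
    assume dim: "fun_vs.dim ?N = 1"
    show "\<forall>g\<in>?N. (\<forall>z. 0 \<le> g z) \<longrightarrow> sum g UNIV = 1 \<longrightarrow> g = ?t"
    proof (intro ballI impI)
      fix g assume "g \<in> ?N" and "sum g UNIV = 1"
      then show "g = ?t"
        using eq_if_dim_1_same_sum[OF dim \<open>g \<in> ?N\<close> t(1)] t(3) by simp
    qed
  qed
qed

end
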